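(* Let $X$ be a Banach space with three closed linear subspaces $M,N,L$ such that $M\supsetneq L$. Then for each pair of positive numbers $(a,b)$ with $(a+1)(b+1)<2$, either there exists $u\in M$ with $\|u\|=1$ and $\operatorname{dist}(u,N)>a$, or there exists $v\in N$ with $\|v\|=1$ and $\operatorname{dist}(v,L)>b$. *)

theory Defs
  imports "HOL-Analysis.Analysis"
begin

end

theory Submission
  imports Defs
begin

(* Suppose neither alternative holds. Homogeneity of the distance to a subspace turns the second
   failure into dist(n, L) <= b |n| for every n in N, so for a unit vector u of M the triangle
   inequality through a near-best n in N gives dist(u, L) <= a + b + ab = (a+1)(b+1) - 1 < 1.
   Riesz's lemma produces a unit vector u of M with dist(u, L) arbitrarily close to 1. *)

lemma infdist_greatest:
  assumes "A \<noteq> {}" "\<And>y. y \<in> A \<Longrightarrow> r \<le> dist x y"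
  shows "r \<le> infdist x A"
  using assms unfolding infdist_notempty[OF assms(1)] by (rule cINF_greatest)

lemma infdist_less_iff:
  assumes "A \<noteq> {}"
  shows "infdist x A < r \<longleftrightarrow> (\<exists>y\<in>A. dist x y < r)"
  using assms infdist_greatest[OF assms, of r x] infdist_le[of _ A x]
  by (meson le_less_trans not_le)

lemma infdist_add_subspace:
  fixes L :: "'a::real_normed_vector set"
  assumes "subspace L" "y \<in> L"
  shows "infdist (x + y) L = infdist x L"
proof -
  have le: "infdist (x + y) L \<le> infdist x L" if "y \<in> L" for x y
  proof (rule infdist_greatest)
    show "L \<noteq> {}" using that by blast
    fix z assume "z \<in> L"
    then have "infdist (x + y) L \<le> dist (x + y) (z + y)"
      using that assms(1) by (intro infdist_le subspace_add)
    then show "infdist (x + y) L \<le> dist x z" by (simp add: dist_norm)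
  qed
  have "infdist x L = infdist ((x + y) + - y) L" by simp
  also have "\<dots> \<le> infdist (x + y) L" using assms by (intro le subspace_neg)
  finally show ?thesis using le[OF assms(2), of x] by linarith
qed

lemma infdist_scaleR_subspace_le:
  fixes L :: "'a::real_normed_vector set"
  assumes "subspace L"
  shows "infdist (c *\<^sub>R x) L \<le> \<bar>c\<bar> * infdist x L"
proof (cases "c = 0")
  case True
  then show ?thesis using assms by (simp add: subspace_0)
next
  case False
  have "infdist (c *\<^sub>R x) L / \<bar>c\<bar> \<le> infdist x L"
  proof (rule infdist_greatest)
    show "L \<noteq> {}" using assms subspace_0 by blast
    fix z assume "z \<in> L"
    then have "infdist (c *\<^sub>R x) L \<le> dist (c *\<^sub>R x) (c *\<^sub>R z)"
      using assms by (intro infdist_le subspace_mul)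
    also have "\<dots> = \<bar>c\<bar> * dist x z"
      by (simp flip: scaleR_diff_right add: dist_norm)
    finally show "infdist (c *\<^sub>R x) L / \<bar>c\<bar> \<le> dist x z"
      using False by (simp add: divide_le_eq mult.commute)
  qed
  then show ?thesis using False by (simp add: divide_le_eq mult.commute)
qed

lemma infdist_subspace_le_norm:
  fixes N L :: "'a::real_normed_vector set"
  assumes "subspace N" "subspace L"
    and unit: "\<And>v. v \<in> N \<Longrightarrow> norm v = 1 \<Longrightarrow> infdist v L \<le> b"
    and "x \<in> N"
  shows "infdist x L \<le> b * norm x"
proof (cases "x = 0")
  case True
  then show ?thesis using assms(2) by (simp add: subspace_0)
next
  case False
  define v where "v = (1 / norm x) *\<^sub>R x"
  have "v \<in> N" "norm v = 1"
    using False assms(1,4) by (simp_all add: v_def subspace_mul)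
  have "infdist x L = infdist (norm x *\<^sub>R v) L" using False by (simp add: v_def)
  also have "\<dots> \<le> norm x * infdist v L"
    using infdist_scaleR_subspace_le[OF assms(2), of "norm x" v] by simp
  also have "\<dots> \<le> norm x * b"
    using unit[OF \<open>v \<in> N\<close> \<open>norm v = 1\<close>] by (simp add: mult_left_mono)
  finally show ?thesis by (simp add: mult.commute)
qed

lemma infdist_le_via_subspace:
  fixes N L :: "'a::real_normed_vector set"
  assumes "subspace N" "subspace L" "b \<ge> 0"
    and unit: "\<And>v. v \<in> N \<Longrightarrow> norm v = 1 \<Longrightarrow> infdist v L \<le> b"
  shows "infdist u L \<le> (1 + b) * infdist u N + b * norm u"
proof -
  have "(infdist u L - b * norm u) / (1 + b) \<le> infdist u N"
  proof (rule infdist_greatest)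
    show "N \<noteq> {}" using assms(1) subspace_0 by blast
    fix n assume "n \<in> N"
    have "norm n \<le> norm u + dist u n"
      using norm_triangle_ineq2[of n u] by (simp add: dist_norm norm_minus_commute)
    then have "b * norm n \<le> b * (norm u + dist u n)" using assms(3) by (rule mult_left_mono)
    moreover have "infdist u L \<le> infdist n L + dist u n" by (rule infdist_triangle)
    moreover have "infdist n L \<le> b * norm n"
      using infdist_subspace_le_norm[OF assms(1,2) unit \<open>n \<in> N\<close>] .
    ultimately show "(infdist u L - b * norm u) / (1 + b) \<le> dist u n"
      using assms(3) by (simp add: divide_le_eq algebra_simps)
  qed
  then show ?thesis using assms(3) by (simp add: divide_le_eq algebra_simps)
qed

lemma riesz_lemma:
  fixes M L :: "'a::real_normed_vector set"
  assumes "subspace M" "subspace L" "closed L" "L \<subset> M" "0 < \<theta>" "\<theta> < 1"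
  shows "\<exists>u\<in>M. norm u = 1 \<and> \<theta> \<le> infdist u L"
proof -
  obtain x where "x \<in> M" "x \<notin> L" using assms(4) by blast
  have "L \<noteq> {}" using assms(2) subspace_0 by blast
  define d where "d = infdist x L"
  have "d > 0"
    unfolding d_def using infdist_pos_not_in_closed[OF assms(3) \<open>L \<noteq> {}\<close> \<open>x \<notin> L\<close>] .
  then have "d < d / \<theta>" using assms(5,6) by (simp add: less_divide_eq)
  then obtain y where "y \<in> L" "dist x y < d / \<theta>"
    using infdist_less_iff[OF \<open>L \<noteq> {}\<close>] unfolding d_def by blast
  define r where "r = norm (x - y)"
  have "r > 0" using \<open>x \<notin> L\<close> \<open>y \<in> L\<close> by (auto simp: r_def)
  define u where "u = (1 / r) *\<^sub>R (x - y)"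
  have "u \<in> M" using \<open>x \<in> M\<close> \<open>y \<in> L\<close> assms(1,4)
    by (auto simp: u_def intro!: subspace_mul subspace_diff)
  have "norm u = 1" using \<open>r > 0\<close> by (simp add: u_def r_def)
  have "d = infdist (r *\<^sub>R u + y) L" using \<open>r > 0\<close> by (simp add: d_def u_def)
  also have "\<dots> = infdist (r *\<^sub>R u) L" by (rule infdist_add_subspace[OF assms(2) \<open>y \<in> L\<close>])
  also have "\<dots> \<le> r * infdist u L"
    using infdist_scaleR_subspace_le[OF assms(2), of r u] \<open>r > 0\<close> by simp
  finally have "d \<le> r * infdist u L" .
  moreover have "r * \<theta> < d"
    using \<open>dist x y < d / \<theta>\<close> assms(5) by (simp add: r_def dist_norm less_divide_eq)
  ultimately have "r * \<theta> < r * infdist u L" by linarith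
  then have "\<theta> \<le> infdist u L" using \<open>r > 0\<close> by simp
  then show ?thesis using \<open>u \<in> M\<close> \<open>norm u = 1\<close> by blast
qed

theorem lemma2p7:
  fixes M N L :: "'a::banach set" and a b :: real
  assumes "subspace M" and "closed M"
    and "subspace N" and "closed N"
    and "subspace L" and "closed L"
    and "L \<subset> M"
    and "a > 0" and "b > 0" and "(a + 1) * (b + 1) < 2"
  shows "(\<exists>u\<in>M. norm u = 1 \<and> infdist u N > a) \<or>
         (\<exists>v\<in>N. norm v = 1 \<and> infdist v L > b)"
proof (rule ccontr)
  assume "\<not> ?thesis"
  then have M_near_N: "\<And>u. u \<in> M \<Longrightarrow> norm u = 1 \<Longrightarrow> infdist u N \<le> a"
    and N_near_L: "\<And>v. v \<in> N \<Longrightarrow> norm v = 1 \<Longrightarrow> infdist v L \<le> b"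
    by (auto simp: not_less)
  define \<theta> where "\<theta> = (1 + (a + b + a * b)) / 2"
  have "0 < a * b" using assms(8,9) by simp
  then have "0 < a + b + a * b" using assms(8,9) by linarith
  moreover have "a + b + a * b < 1" using assms(10) by (simp add: algebra_simps)
  ultimately have "0 < \<theta>" "\<theta> < 1" "a + b + a * b < \<theta>"
    by (simp_all add: \<theta>_def)
  then obtain u where "u \<in> M" "norm u = 1" "\<theta> \<le> infdist u L"
    using riesz_lemma[OF assms(1,5,6,7)] by blast
  have "infdist u L \<le> (1 + b) * infdist u N + b"
    using infdist_le_via_subspace[OF assms(3,5) less_imp_le[OF assms(9)] N_near_L, of u]
      \<open>norm u = 1\<close> by simp
  also have "\<dots> \<le> (1 + b) * a + b"
    using M_near_N[OF \<open>u \<in> M\<close> \<open>norm u = 1\<close>] assms(9) by (simp add: mult_left_mono)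
  also have "\<dots> = a + b + a * b" by (simp add: algebra_simps)
  finally show False using \<open>a + b + a * b < \<theta>\<close> \<open>\<theta> \<le> infdist u L\<close> by linarith
qed

end
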